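(* For any $E_1,E_2\in\mathfrak g$ there exist polynomials $\tilde\alpha_k(x_1,x_2)\in\mathbb C[x_1,x_2]$, $k=0,\dots,(\dim\mathfrak g)^2$, not all zero, such that $$\sum_{k=0}^{(\dim\mathfrak g)^2}\tilde\alpha_k(x_1,x_2)\frac{\partial^k}{\partial x_1^k}W_2(x_1.E_1,x_2.E_2)=0$$ for all $x_1\neq x_2$ in $U$.
   Context: Let $G\subset GL(r,\mathbb C)$ be a complex reductive Lie group given in a faithful matrix representation, with Lie algebra $\mathfrak g\subset\mathfrak{gl}(r,\mathbb C)$; ${\rm Tr}$ denotes the matrix trace. Let $\mathcal D(x)$ be an $r\times r$ matrix with rational entries in $x$, $\mathcal D(x)\in\mathfrak g$. Let $\Psi(x)$ be a holomorphic $G$-valued solution of $\frac{d}{dx}\Psi=\mathcal D\Psi$ on a simply connected domain $U\subset\mathbb C$ avoiding the poles of $\mathcal D$. For $x\in U$, $E\in\mathfrak g$, write $x.E$ for the pair and $M(x.E)=\Psi(x)E\Psi(x)^{-1}$. For $X_i=x_i.E_i$ with $x_1\ne x_2$ define $W_2(X_1,X_2)=\frac{1}{(x_1-x_2)^2}{\rm Tr}\,M(X_1)M(X_2)$. *)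

theory Defs
  imports "HOL-Analysis.Analysis" "HOL-Computational_Algebra.Polynomial"
begin

type_synonym 'n cmat = "complex^'n^'n"

definition cscale :: "complex \<Rightarrow> 'n::finite cmat \<Rightarrow> 'n cmat" where
  "cscale c A = (\<chi> i j. c * A $ i $ j)"

lemma cscale_vector_space: "Vector_Spaces.vector_space (cscale :: complex \<Rightarrow> 'n::finite cmat \<Rightarrow> 'n cmat)"
  by unfold_locales (simp_all add: cscale_def vec_eq_iff algebra_simps)

definition cdim :: "'n::finite cmat set \<Rightarrow> nat" where
  "cdim S = vector_space.dim cscale S"

definition csubspace :: "'n::finite cmat set \<Rightarrow> bool" where
  "csubspace S \<longleftrightarrow> 0 \<in> S \<and> (\<forall>A\<in>S. \<forall>B\<in>S. A + B \<in> S) \<and> (\<forall>c. \<forall>A\<in>S. cscale c A \<in> S)"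

definition commutator :: "'n::finite cmat \<Rightarrow> 'n cmat \<Rightarrow> 'n cmat" where
  "commutator A B = A ** B - B ** A"

definition matrix_lie_algebra :: "'n::finite cmat set \<Rightarrow> 'n cmat set" where
  "matrix_lie_algebra G = {A. \<exists>\<gamma> :: real \<Rightarrow> 'n cmat. \<gamma> 0 = mat 1 \<and> (\<forall>t. \<gamma> t \<in> G)
       \<and> (\<gamma> has_vector_derivative A) (at 0)}"

text \<open>A closed subgroup of GL(r,C) which is a complex Lie group
  (its Lie algebra is a complex subspace).\<close>
definition complex_matrix_lie_group :: "'n::finite cmat set \<Rightarrow> bool" where
  "complex_matrix_lie_group G \<longleftrightarrow>
     G \<subseteq> {A. invertible A} \<and> mat 1 \<in> G \<and>
     (\<forall>A\<in>G. \<forall>B\<in>G. A ** B \<in> G) \<and> (\<forall>A\<in>G. matrix_inv A \<in> G) \<and>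
     closedin (top_of_set {A. invertible A}) G \<and>
     csubspace (matrix_lie_algebra G)"

definition lie_ideal :: "'n::finite cmat set \<Rightarrow> 'n cmat set \<Rightarrow> bool" where
  "lie_ideal g I \<longleftrightarrow> csubspace I \<and> I \<subseteq> g \<and> (\<forall>A\<in>g. \<forall>B\<in>I. commutator A B \<in> I)"

text \<open>Reductive Lie algebra: the adjoint representation is completely reducible,
  i.e. every ideal has a complementary ideal.\<close>
definition reductive_lie_algebra :: "'n::finite cmat set \<Rightarrow> bool" where
  "reductive_lie_algebra g \<longleftrightarrow> csubspace g \<and> (\<forall>A\<in>g. \<forall>B\<in>g. commutator A B \<in> g) \<and>
     (\<forall>I. lie_ideal g I \<longrightarrow> (\<exists>J. lie_ideal g J \<and> I \<inter> J = {0} \<and> {A + B | A B. A \<in> I \<and> B \<in> J} = g))"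

definition reductive_complex_matrix_group :: "'n::finite cmat set \<Rightarrow> bool" where
  "reductive_complex_matrix_group G \<longleftrightarrow>
     complex_matrix_lie_group G \<and> reductive_lie_algebra (matrix_lie_algebra G)"

definition rational_matrix_fun ::
  "(complex \<Rightarrow> 'n::finite cmat) \<Rightarrow> ('n \<Rightarrow> 'n \<Rightarrow> complex poly) \<Rightarrow> ('n \<Rightarrow> 'n \<Rightarrow> complex poly) \<Rightarrow> bool" where
  "rational_matrix_fun D P Q \<longleftrightarrow> (\<forall>i j. Q i j \<noteq> 0 \<and> coprime (P i j) (Q i j) \<and>
     (\<forall>x. poly (Q i j) x \<noteq> 0 \<longrightarrow> D x $ i $ j = poly (P i j) x / poly (Q i j) x))"

definition poles :: "('n::finite \<Rightarrow> 'n \<Rightarrow> complex poly) \<Rightarrow> complex set" where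
  "poles Q = {x. \<exists>i j. poly (Q i j) x = 0}"

definition Mmat :: "(complex \<Rightarrow> 'n::finite cmat) \<Rightarrow> complex \<Rightarrow> 'n cmat \<Rightarrow> 'n cmat" where
  "Mmat \<Psi> x E = \<Psi> x ** E ** matrix_inv (\<Psi> x)"

definition W2 :: "(complex \<Rightarrow> 'n::finite cmat) \<Rightarrow> complex \<Rightarrow> 'n cmat \<Rightarrow> complex \<Rightarrow> 'n cmat \<Rightarrow> complex" where
  "W2 \<Psi> x1 E1 x2 E2 = trace (Mmat \<Psi> x1 E1 ** Mmat \<Psi> x2 E2) / (x1 - x2)^2"

text \<open>Bivariate polynomials: C[x1,x2] represented as (C[x1])[x2].\<close>
definition poly2 :: "complex poly poly \<Rightarrow> complex \<Rightarrow> complex \<Rightarrow> complex" where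
  "poly2 p x1 x2 = poly (map_poly (\<lambda>c. poly c x1) p) x2"

end

theory Submission
  imports Defs
begin

text \<open>The conjugate M(y) = Psi(y) E1 Psi(y)^-1 stays in the Lie algebra g and solves M' = [D, M].
  With respect to a basis of g, of dimension d, the coordinates of M(y) / (y - x2)^2 therefore solve a
  linear system u' = A u / p whose coefficients are polynomials in y and x2 (after clearing the
  denominators of D). Inductively u^(k) = R_k u / p^k with polynomial d x d matrices R_k, and W2 is a
  linear combination of the coordinates of u with coefficients independent of k, so the k-th derivative
  of W2 is <c, R_k> / p^k. The d^2 + 1 matrices R_0, ..., R_(d^2) over the domain C[x1,x2] are linearly
  dependent, and a nontrivial relation sum alpha_k R_k = 0 yields the coefficients alpha_k p^k.\<close>

section \<open>Linear relations and coordinates\<close>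

lemma nontrivial_linear_relation:
  fixes v :: "'k \<Rightarrow> 'i \<Rightarrow> 'a::idom"
  assumes "finite I" "finite K" "card I < card K"
  shows "\<exists>c. (\<exists>k\<in>K. c k \<noteq> 0) \<and> (\<forall>i\<in>I. (\<Sum>k\<in>K. c k * v k i) = 0)"
  using assms
proof (induction I arbitrary: K v rule: finite_induct)
  case empty
  then obtain k where "k \<in> K" by fastforce
  then show ?case by (intro exI[of _ "\<lambda>_. 1"]) auto
next
  case (insert i I)
  show ?case
  proof (cases "\<forall>k\<in>K. v k i = 0")
    case True
    have "card I < card K" using insert by simp
    from insert.IH[OF insert.prems(1) this] obtain c where
      c: "\<exists>k\<in>K. c k \<noteq> 0" "\<forall>i\<in>I. (\<Sum>k\<in>K. c k * v k i) = 0" by blast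
    show ?thesis using c True by (intro exI[of _ c]) auto
  next
    case False
    then obtain k0 where k0: "k0 \<in> K" "v k0 i \<noteq> 0" by blast
    define a where "a = v k0 i"
    \<comment> \<open>Fraction-free elimination of the coordinate \<open>i\<close> against the pivot \<open>v k0\<close>.\<close>
    define w where "w k j = a * v k j - v k i * v k0 j" for k j
    have "card (K - {k0}) = card K - 1" using k0 insert by simp
    then have "card I < card (K - {k0})" using insert by simp
    from insert.IH[OF _ this, of w] obtain c where
      c: "\<exists>k\<in>K - {k0}. c k \<noteq> 0" "\<forall>j\<in>I. (\<Sum>k\<in>K - {k0}. c k * w k j) = 0"
      using insert by auto
    define c' where "c' k = (if k = k0 then - (\<Sum>k\<in>K - {k0}. c k * v k i) else a * c k)" for k
    have split: "(\<Sum>k\<in>K. c' k * v k j) = c' k0 * v k0 j + (\<Sum>k\<in>K - {k0}. a * c k * v k j)" for j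
      using insert.prems(1) k0 by (simp add: sum.remove c'_def)
    have "(\<Sum>k\<in>K. c' k * v k j) = 0" if "j \<in> insert i I" for j
    proof (cases "j = i")
      case True
      then show ?thesis unfolding split by (simp add: c'_def a_def sum_distrib_left algebra_simps)
    next
      case False
      then have "(\<Sum>k\<in>K - {k0}. c k * w k j) = 0" using c that by auto
      then have "(\<Sum>k\<in>K - {k0}. a * c k * v k j) - (\<Sum>k\<in>K - {k0}. c k * v k i) * v k0 j = 0"
        by (simp add: w_def algebra_simps sum_subtractf sum_distrib_left sum_distrib_right)
      then show ?thesis unfolding split by (simp add: c'_def algebra_simps)
    qed
    moreover have "\<exists>k\<in>K. c' k \<noteq> 0"
      using c(1) k0 by (auto simp: c'_def a_def)
    ultimately show ?thesis by blast
  qed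
qed

interpretation cs: vector_space "cscale :: complex \<Rightarrow> 'n::finite cmat \<Rightarrow> 'n cmat"
  by (rule cscale_vector_space)

definition matrix_unit :: "'n::finite \<Rightarrow> 'n \<Rightarrow> 'n cmat" where
  "matrix_unit i j = (\<chi> a b. if a = i \<and> b = j then 1 else 0)"

definition lin_form :: "('n::finite \<Rightarrow> 'n \<Rightarrow> complex) \<Rightarrow> 'n cmat \<Rightarrow> complex" where
  "lin_form L X = (\<Sum>i\<in>UNIV. \<Sum>j\<in>UNIV. L i j * X $ i $ j)"

lemma cscale_component [simp]: "cscale c A $ i $ j = c * A $ i $ j"
  by (simp add: cscale_def)

lemma matrix_unit_expansion: "X = (\<Sum>i\<in>UNIV. \<Sum>j\<in>UNIV. cscale (X $ i $ j) (matrix_unit i j))"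
proof -
  have "(\<Sum>i\<in>UNIV. \<Sum>j\<in>UNIV. X $ i $ j * (if a = i \<and> b = j then 1 else 0)) = X $ a $ b" for a b
  proof -
    have "(\<Sum>j\<in>UNIV. X $ i $ j * (if a = i \<and> b = j then 1 else 0)) = (if a = i then X $ i $ b else 0)"
      for i by (cases "a = i") (simp_all add: if_distrib[of "times _"] cong: if_cong)
    then show ?thesis by simp
  qed
  then show ?thesis by (simp add: vec_eq_iff matrix_unit_def)
qed

lemma lin_form_sum_cscale:
  "lin_form L (\<Sum>m\<in>S. cscale (c m) (B m)) = (\<Sum>m\<in>S. c m * lin_form L (B m))"
proof -
  have "lin_form L (\<Sum>m\<in>S. cscale (c m) (B m)) = (\<Sum>i\<in>UNIV. \<Sum>j\<in>UNIV. \<Sum>m\<in>S. c m * (L i j * B m $ i $ j))"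
    by (simp add: lin_form_def sum_distrib_left mult.left_commute)
  also have "\<dots> = (\<Sum>i\<in>UNIV. \<Sum>m\<in>S. \<Sum>j\<in>UNIV. c m * (L i j * B m $ i $ j))"
    by (simp only: sum.swap[of _ S])
  also have "\<dots> = (\<Sum>m\<in>S. \<Sum>i\<in>UNIV. \<Sum>j\<in>UNIV. c m * (L i j * B m $ i $ j))"
    by (rule sum.swap)
  finally show ?thesis
    by (simp add: lin_form_def sum_distrib_left)
qed

lemma cs_independent_finite:
  assumes "cs.independent (B :: 'n::finite cmat set)"
  shows "finite B"
proof -
  have "X \<in> cs.span (range (case_prod matrix_unit))" for X :: "'n cmat"
  proof -
    have "matrix_unit i j \<in> range (case_prod matrix_unit)" for i j
      by (metis case_prod_conv rangeI)
    then have "(\<Sum>i\<in>UNIV. \<Sum>j\<in>UNIV. cscale (X $ i $ j) (matrix_unit i j)) \<in> cs.span (range (case_prod matrix_unit))"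
      by (intro cs.span_sum cs.span_scale cs.span_base)
    then show ?thesis
      by (subst matrix_unit_expansion)
  qed
  then have "B \<subseteq> cs.span (range (case_prod matrix_unit))"
    by blast
  from cs.independent_span_bound[OF _ assms this] show ?thesis
    by simp
qed

lemma lin_form_coordinates:
  fixes g :: "'n::finite cmat set"
  shows "\<exists>b L. (\<forall>l<cdim g. b l \<in> g) \<and>
     (\<forall>X\<in>g. X = (\<Sum>l<cdim g. cscale (lin_form (L l) X) (b l)))"
proof -
  obtain B where B: "B \<subseteq> g" "cs.independent B" "g \<subseteq> cs.span B" "card B = cdim g"
    using cs.basis_exists unfolding cdim_def by blast
  have fin: "finite B" using cs_independent_finite[OF B(2)] .
  obtain b where b: "bij_betw b {..<cdim g} B"
    using ex_bij_betw_nat_finite[OF fin] B(4) by (auto simp: atLeast0LessThan)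
  define E where "E = cs.extend_basis B"
  have E: "cs.independent E" "cs.span E = UNIV" "B \<subseteq> E"
    unfolding E_def
    using cs.independent_extend_basis[OF B(2)] cs.extend_basis_superset[OF B(2)]
      cs.span_extend_basis[OF B(2)] by auto
  \<comment> \<open>Coordinates with respect to a basis of the whole matrix space are linear in the entries.\<close>
  define L where "L l i j = cs.representation E (matrix_unit i j) (b l)" for l i j
  have coord: "cs.representation E X (b l) = lin_form (L l) X" for X l
  proof -
    have "cs.representation E X (b l)
        = cs.representation E (\<Sum>i\<in>UNIV. \<Sum>j\<in>UNIV. cscale (X $ i $ j) (matrix_unit i j)) (b l)"
      using matrix_unit_expansion[of X] by simp
    also have "\<dots> = lin_form (L l) X"
      using E by (simp add: cs.representation_sum cs.representation_scale lin_form_def L_def mult.commute)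
    finally show ?thesis .
  qed
  have "X = (\<Sum>l<cdim g. cscale (lin_form (L l) X) (b l))" if X: "X \<in> g" for X
  proof -
    have XB: "X \<in> cs.span B" using X B by auto
    have "X = (\<Sum>v\<in>B. cscale (cs.representation B X v) v)"
      using cs.sum_representation_eq[OF B(2) XB fin] by simp
    also have "\<dots> = (\<Sum>v\<in>B. cscale (cs.representation E X v) v)"
      using cs.representation_extend[OF E(1) XB E(3)] by simp
    also have "\<dots> = (\<Sum>l<cdim g. cscale (cs.representation E X (b l)) (b l))"
      using sum.reindex_bij_betw[OF b, of "\<lambda>v. cscale (cs.representation E X v) v"] by simp
    finally show ?thesis by (simp add: coord)
  qed
  moreover have "\<forall>l<cdim g. b l \<in> g"
    using b B(1) by (auto simp: bij_betw_def)
  ultimately show ?thesis by blast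
qed

section \<open>Holomorphic matrix functions\<close>

lemma invertible_matrix_inv:
  fixes A :: "'a::semiring_1^'n^'m"
  assumes "invertible A"
  shows "A ** matrix_inv A = mat 1" "matrix_inv A ** A = mat 1"
  using someI_ex[OF assms[unfolded invertible_def]] unfolding matrix_inv_def by blast+

lemma matrix_add_rdistrib: "((A::'a::semiring_1^'n^'m) + B) ** C = A ** C + B ** C"
  by (simp add: vec_eq_iff matrix_matrix_mult_def sum.distrib distrib_right)

lemma matrix_mul_uminus_left: "(- (A::'a::ring_1^'n^'m)) ** B = - (A ** B)"
  by (simp add: vec_eq_iff matrix_matrix_mult_def sum_negf)

lemma matrix_mul_uminus_right: "(A::'a::ring_1^'n^'m) ** (- B) = - (A ** B)"
  by (simp add: vec_eq_iff matrix_matrix_mult_def sum_negf)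

lemma matrix_inv_component_cramer:
  fixes A :: "'a::field^'n^'n"
  assumes "invertible A"
  shows "matrix_inv A $ k $ j = det (\<chi> a b. if b = k then mat 1 $ a $ j else A $ a $ b) / det A"
proof -
  have d: "det A \<noteq> 0"
    using assms invertible_det_nz by blast
  have "A *v (\<chi> i. matrix_inv A $ i $ j) = (\<chi> a. (A ** matrix_inv A) $ a $ j)"
    by (simp add: vec_eq_iff matrix_vector_mult_def matrix_matrix_mult_def)
  also have "\<dots> = (\<chi> a. mat 1 $ a $ j)"
    using invertible_matrix_inv(1)[OF assms] by simp
  finally have "A *v (\<chi> i. matrix_inv A $ i $ j) = (\<chi> a. mat 1 $ a $ j)" .
  from cramer[OF d, THEN iffD1, OF this]
  have "(\<chi> i. matrix_inv A $ i $ j) $ k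
      = (\<chi> k. det (\<chi> a b. if b = k then (\<chi> a. mat 1 $ a $ j) $ a else A $ a $ b) / det A) $ k"
    by simp
  then show ?thesis
    unfolding vec_lambda_beta .
qed

lemma holomorphic_on_det:
  "(\<And>i j. (\<lambda>x. F x $ i $ j) holomorphic_on S) \<Longrightarrow> (\<lambda>x. det (F x :: complex^'n::finite^'n)) holomorphic_on S"
  unfolding det_def by (intro holomorphic_intros) auto

lemma holomorphic_on_matrix_inv:
  fixes F :: "complex \<Rightarrow> complex^'n::finite^'n"
  assumes hol: "\<And>i j. (\<lambda>x. F x $ i $ j) holomorphic_on S"
    and inv: "\<And>x. x \<in> S \<Longrightarrow> invertible (F x)"
  shows "(\<lambda>x. matrix_inv (F x) $ i $ j) holomorphic_on S"
proof -
  have "(\<lambda>x. det (\<chi> a b. if b = i then mat 1 $ a $ j else F x $ a $ b)) holomorphic_on S"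
  proof (rule holomorphic_on_det)
    show "(\<lambda>x. (\<chi> a b. if b = i then mat 1 $ a $ j else F x $ a $ b) $ a $ b) holomorphic_on S" for a b
      by (cases "b = i") (simp_all add: hol)
  qed
  moreover have "(\<lambda>x. det (F x)) holomorphic_on S" "\<And>x. x \<in> S \<Longrightarrow> det (F x) \<noteq> 0"
    using holomorphic_on_det[OF hol] inv invertible_det_nz by auto
  ultimately have "(\<lambda>x. det (\<chi> a b. if b = i then mat 1 $ a $ j else F x $ a $ b) / det (F x)) holomorphic_on S"
    by (intro holomorphic_on_divide)
  then show ?thesis
    by (rule holomorphic_transform) (simp add: matrix_inv_component_cramer inv)
qed

lemma matrix_lie_algebra_conj:
  fixes G :: "'n::finite cmat set"
  assumes G: "complex_matrix_lie_group G" and A: "A \<in> G" and E: "E \<in> matrix_lie_algebra G"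
  shows "A ** E ** matrix_inv A \<in> matrix_lie_algebra G"
proof -
  obtain \<gamma> :: "real \<Rightarrow> 'n cmat" where \<gamma>: "\<gamma> 0 = mat 1" "\<forall>t. \<gamma> t \<in> G"
    "(\<gamma> has_vector_derivative E) (at 0)"
    using E unfolding matrix_lie_algebra_def by blast
  have "invertible A" "matrix_inv A \<in> G" "\<And>X Y. X \<in> G \<Longrightarrow> Y \<in> G \<Longrightarrow> X ** Y \<in> G"
    using G A unfolding complex_matrix_lie_group_def by blast+
  then have "(\<lambda>t. A ** \<gamma> t ** matrix_inv A) 0 = mat 1" "\<forall>t. A ** \<gamma> t ** matrix_inv A \<in> G"
    using \<gamma> A by (simp_all add: invertible_matrix_inv(1))
  moreover have "bounded_linear (\<lambda>X::'n cmat. A ** X ** matrix_inv A)"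
    by (intro linear_conv_bounded_linear[THEN iffD1] linearI)
      (simp_all add: matrix_add_ldistrib matrix_add_rdistrib matrix_scalar_ac scalar_matrix_assoc)
  then have "((\<lambda>t. A ** \<gamma> t ** matrix_inv A) has_vector_derivative A ** E ** matrix_inv A) (at 0)"
    using bounded_linear.has_vector_derivative \<gamma>(3) by blast
  ultimately show ?thesis
    unfolding matrix_lie_algebra_def mem_Collect_eq by (intro exI[of _ "\<lambda>t. A ** \<gamma> t ** matrix_inv A"]) simp
qed

definition has_entrywise_derivative :: "(complex \<Rightarrow> 'n::finite cmat) \<Rightarrow> 'n cmat \<Rightarrow> complex \<Rightarrow> bool" where
  "has_entrywise_derivative F F' x \<longleftrightarrow>
     (\<forall>i j. ((\<lambda>y. F y $ i $ j) has_field_derivative F' $ i $ j) (at x))"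

lemma has_entrywise_derivative_const: "has_entrywise_derivative (\<lambda>y. A) 0 x"
  unfolding has_entrywise_derivative_def by simp

lemma has_entrywise_derivative_mult:
  assumes "has_entrywise_derivative F F' x" "has_entrywise_derivative H H' x"
  shows "has_entrywise_derivative (\<lambda>y. F y ** H y) (F' ** H x + F x ** H') x"
  unfolding has_entrywise_derivative_def
proof (intro allI)
  fix i j
  have "((\<lambda>y. \<Sum>k\<in>UNIV. F y $ i $ k * H y $ k $ j) has_field_derivative
         (\<Sum>k\<in>UNIV. F' $ i $ k * H x $ k $ j + F x $ i $ k * H' $ k $ j)) (at x)"
    using assms unfolding has_entrywise_derivative_def
    by (intro DERIV_sum) (auto intro!: derivative_eq_intros)
  then show "((\<lambda>y. (F y ** H y) $ i $ j) has_field_derivative (F' ** H x + F x ** H') $ i $ j) (at x)"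
    by (simp add: matrix_matrix_mult_def sum.distrib)
qed

lemma has_entrywise_derivative_unique:
  "has_entrywise_derivative F A x \<Longrightarrow> has_entrywise_derivative F B x \<Longrightarrow> A = B"
  unfolding has_entrywise_derivative_def vec_eq_iff by (metis DERIV_unique)

lemma has_entrywise_derivative_transform_within_open:
  assumes "has_entrywise_derivative F A x" "open S" "x \<in> S" "\<And>y. y \<in> S \<Longrightarrow> F y = H y"
  shows "has_entrywise_derivative H A x"
  using assms has_field_derivative_transform_within_open
  unfolding has_entrywise_derivative_def by fastforce

lemma has_entrywise_derivative_Mmat:
  fixes \<Psi> :: "complex \<Rightarrow> 'n::finite cmat"
  assumes U: "open U" "x \<in> U"
    and inv: "\<And>y. y \<in> U \<Longrightarrow> invertible (\<Psi> y)"
    and hol: "\<And>i j. (\<lambda>y. \<Psi> y $ i $ j) holomorphic_on U"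
    and \<Psi>': "has_entrywise_derivative \<Psi> (A ** \<Psi> x) x"
  shows "has_entrywise_derivative (\<lambda>y. Mmat \<Psi> y E) (commutator A (Mmat \<Psi> x E)) x"
proof -
  define \<Phi> where "\<Phi> y = matrix_inv (\<Psi> y)" for y
  define \<Phi>' where "\<Phi>' = (\<chi> i j. deriv (\<lambda>y. \<Phi> y $ i $ j) x)"
  have \<Phi>_der: "has_entrywise_derivative \<Phi> \<Phi>' x"
    unfolding has_entrywise_derivative_def \<Phi>'_def \<Phi>_def
    using holomorphic_derivI[OF holomorphic_on_matrix_inv[OF hol inv] U] by simp
  have "has_entrywise_derivative (\<lambda>y. \<Phi> y ** \<Psi> y) 0 x"
    by (rule has_entrywise_derivative_transform_within_open[OF has_entrywise_derivative_const U])
      (simp add: \<Phi>_def invertible_matrix_inv(2) inv)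
  from has_entrywise_derivative_unique[OF has_entrywise_derivative_mult[OF \<Phi>_der \<Psi>'] this]
  have \<Phi>'\<Psi>: "\<Phi>' ** \<Psi> x = - (\<Phi> x ** (A ** \<Psi> x))"
    by (simp add: eq_neg_iff_add_eq_0)
  have \<Psi>\<Phi>: "\<Psi> x ** \<Phi> x = mat 1"
    using invertible_matrix_inv(1)[OF inv[OF U(2)]] by (simp add: \<Phi>_def)
  have "\<Phi>' = (\<Phi>' ** \<Psi> x) ** \<Phi> x"
    by (simp add: \<Psi>\<Phi> matrix_mul_assoc[symmetric])
  also have "\<dots> = - (\<Phi> x ** A ** (\<Psi> x ** \<Phi> x))"
    unfolding \<Phi>'\<Psi> matrix_mul_uminus_left by (simp add: matrix_mul_assoc)
  also have "\<dots> = - (\<Phi> x ** A)"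
    by (simp add: \<Psi>\<Phi>)
  finally have \<Phi>': "\<Phi>' = - (\<Phi> x ** A)" .
  have "has_entrywise_derivative (\<lambda>y. \<Psi> y ** E ** \<Phi> y)
      ((A ** \<Psi> x ** E + \<Psi> x ** 0) ** \<Phi> x + \<Psi> x ** E ** \<Phi>') x"
    by (intro has_entrywise_derivative_mult \<Psi>' \<Phi>_der has_entrywise_derivative_const)
  moreover have "(A ** \<Psi> x ** E + \<Psi> x ** 0) ** \<Phi> x + \<Psi> x ** E ** \<Phi>' = commutator A (\<Psi> x ** E ** \<Phi> x)"
    by (simp add: \<Phi>' commutator_def matrix_mul_assoc matrix_mul_uminus_right)
  moreover have "Mmat \<Psi> y E = \<Psi> y ** E ** \<Phi> y" for y
    by (simp add: Mmat_def \<Phi>_def)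
  ultimately show ?thesis
    by simp
qed

section \<open>Rational coefficients of the adjoint action\<close>

lemma rational_matrix_fun_common_denominator:
  assumes "rational_matrix_fun D P Q"
  shows "\<exists>q Dq. q \<noteq> 0 \<and>
    (\<forall>x. x \<notin> poles Q \<longrightarrow> poly q x \<noteq> 0 \<and> (\<forall>i k. poly (Dq i k) x = poly q x * D x $ i $ k))"
proof -
  define q where "q = (\<Prod>ab\<in>UNIV. Q (fst ab) (snd ab))"
  define Dq where "Dq i k = P i k * (\<Prod>ab\<in>UNIV - {(i, k)}. Q (fst ab) (snd ab))" for i k
  have "q \<noteq> 0"
    using assms unfolding q_def rational_matrix_fun_def by (simp add: prod_zero_iff)
  moreover have "poly q x \<noteq> 0 \<and> poly (Dq i k) x = poly q x * D x $ i $ k" if x: "x \<notin> poles Q" for x i k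
  proof -
    have nz: "poly (Q i k) x \<noteq> 0"
      using x unfolding poles_def by auto
    have "D x $ i $ k = poly (P i k) x / poly (Q i k) x"
      using assms nz unfolding rational_matrix_fun_def by blast
    moreover have "poly q x = poly (Q i k) x * (\<Prod>ab\<in>UNIV - {(i, k)}. poly (Q (fst ab) (snd ab)) x)"
      unfolding q_def poly_prod
      using prod.remove[of UNIV "(i, k)" "\<lambda>ab. poly (Q (fst ab) (snd ab)) x"] by simp
    moreover have "poly q x \<noteq> 0"
      using x unfolding q_def poles_def by (auto simp: poly_prod prod_zero_iff)
    ultimately show ?thesis
      using nz by (simp add: Dq_def poly_prod)
  qed
  ultimately show ?thesis by blast
qed

lemma lin_form_commutator_rational:
  assumes "rational_matrix_fun D P Q"
  shows "\<exists>q \<Gamma>. q \<noteq> 0 \<and> (\<forall>x. x \<notin> poles Q \<longrightarrow> poly q x \<noteq> 0 \<and>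
           (\<forall>L B. poly (\<Gamma> L B) x = poly q x * lin_form L (commutator (D x) B)))"
proof -
  obtain q Dq where q: "q \<noteq> 0" and Dq: "\<And>x. x \<notin> poles Q \<Longrightarrow>
      poly q x \<noteq> 0 \<and> (\<forall>i k. poly (Dq i k) x = poly q x * D x $ i $ k)"
    using rational_matrix_fun_common_denominator[OF assms] by blast
  define \<Gamma> where "\<Gamma> L B = (\<Sum>i\<in>UNIV. \<Sum>j\<in>UNIV.
      smult (L i j) (\<Sum>k\<in>UNIV. Dq i k * [:B $ k $ j:] - [:B $ i $ k:] * Dq k j))" for L B
  have "poly (\<Gamma> L B) x = poly q x * lin_form L (commutator (D x) B)" if x: "x \<notin> poles Q" for x L B
  proof -
    have "poly (\<Gamma> L B) x = (\<Sum>i\<in>UNIV. \<Sum>j\<in>UNIV. L i j *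
        (\<Sum>k\<in>UNIV. poly q x * D x $ i $ k * B $ k $ j - B $ i $ k * (poly q x * D x $ k $ j)))"
      unfolding \<Gamma>_def using Dq[OF x] by (simp add: poly_sum mult_ac)
    also have "\<dots> = poly q x * (\<Sum>i\<in>UNIV. \<Sum>j\<in>UNIV. L i j *
        ((\<Sum>k\<in>UNIV. D x $ i $ k * B $ k $ j) - (\<Sum>k\<in>UNIV. B $ i $ k * D x $ k $ j)))"
      by (simp add: sum_distrib_left sum_subtractf algebra_simps)
    also have "\<dots> = poly q x * lin_form L (commutator (D x) B)"
      by (simp add: lin_form_def commutator_def matrix_matrix_mult_def)
    finally show ?thesis .
  qed
  with q Dq show ?thesis by blast
qed

lemma has_field_derivative_lin_form:
  "has_entrywise_derivative F F' x \<Longrightarrow> ((\<lambda>y. lin_form L (F y)) has_field_derivative lin_form L F') (at x)"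
  unfolding lin_form_def has_entrywise_derivative_def by (auto intro!: DERIV_sum derivative_eq_intros)

lemma commutator_sum_cscale:
  "commutator A (\<Sum>m\<in>S. cscale (c m) (B m)) = (\<Sum>m\<in>S. cscale (c m) (commutator A (B m :: 'n::finite cmat)))"
proof -
  have "commutator A (\<Sum>m\<in>S. cscale (c m) (B m)) $ i $ j = (\<Sum>m\<in>S. cscale (c m) (commutator A (B m))) $ i $ j"
    for i j
  proof -
    have "commutator A (\<Sum>m\<in>S. cscale (c m) (B m)) $ i $ j =
      (\<Sum>k\<in>UNIV. A $ i $ k * (\<Sum>m\<in>S. c m * B m $ k $ j)) - (\<Sum>k\<in>UNIV. (\<Sum>m\<in>S. c m * B m $ i $ k) * A $ k $ j)"
      by (simp add: commutator_def matrix_matrix_mult_def)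
    also have "\<dots> = (\<Sum>m\<in>S. c m * ((\<Sum>k\<in>UNIV. A $ i $ k * B m $ k $ j) - (\<Sum>k\<in>UNIV. B m $ i $ k * A $ k $ j)))"
      by (simp add: sum_distrib_left sum_distrib_right right_diff_distrib sum_subtractf sum.swap[of _ S] algebra_simps)
    also have "\<dots> = (\<Sum>m\<in>S. cscale (c m) (commutator A (B m))) $ i $ j"
      by (simp add: commutator_def matrix_matrix_mult_def)
    finally show ?thesis .
  qed
  then show ?thesis by (simp add: vec_eq_iff)
qed

lemma trace_sum_cscale_mult:
  "trace ((\<Sum>l\<in>S. cscale (c l) (B l)) ** N) = (\<Sum>l\<in>S. c l * trace (B l ** (N :: 'n::finite cmat)))"
proof -
  have "trace ((\<Sum>l\<in>S. cscale (c l) (B l)) ** N) = (\<Sum>i\<in>UNIV. \<Sum>k\<in>UNIV. \<Sum>l\<in>S. c l * (B l $ i $ k * N $ k $ i))"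
    by (simp add: trace_def matrix_matrix_mult_def sum_distrib_right mult.assoc)
  also have "\<dots> = (\<Sum>i\<in>UNIV. \<Sum>l\<in>S. \<Sum>k\<in>UNIV. c l * (B l $ i $ k * N $ k $ i))"
    by (simp only: sum.swap[of _ S])
  also have "\<dots> = (\<Sum>l\<in>S. \<Sum>i\<in>UNIV. \<Sum>k\<in>UNIV. c l * (B l $ i $ k * N $ k $ i))"
    by (rule sum.swap)
  finally show ?thesis
    by (simp add: trace_def matrix_matrix_mult_def sum_distrib_left)
qed

lemma has_field_derivative_lin_form_coordinates:
  assumes expand: "\<And>X. X \<in> g \<Longrightarrow> X = (\<Sum>l<d. cscale (lin_form (L l) X) (b l))"
    and M: "M y \<in> g" and M': "has_entrywise_derivative M (commutator A (M y)) y"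
  shows "((\<lambda>y. lin_form (L m) (M y)) has_field_derivative
           (\<Sum>j<d. lin_form (L m) (commutator A (b j)) * lin_form (L j) (M y))) (at y)"
proof -
  from expand[OF M] have "commutator A (M y) = commutator A (\<Sum>j<d. cscale (lin_form (L j) (M y)) (b j))"
    by (rule arg_cong)
  then have "lin_form (L m) (commutator A (M y))
      = (\<Sum>j<d. lin_form (L m) (commutator A (b j)) * lin_form (L j) (M y))"
    by (simp add: commutator_sum_cscale lin_form_sum_cscale mult.commute)
  then show ?thesis
    using has_field_derivative_lin_form[OF M', of "L m"] by simp
qed

section \<open>Linear systems with polynomial coefficients\<close>

lemma poly2_eq_poly_poly: "poly2 p x1 x2 = poly (poly p [:x2:]) x1"
  unfolding poly2_def
proof (induction p)
  case (pCons a p)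
  have "map_poly (\<lambda>c. poly c x1) (pCons a p) = pCons (poly a x1) (map_poly (\<lambda>c. poly c x1) p)"
    by (rule map_poly_pCons) simp
  then show ?case using pCons.IH by simp
qed simp

lemma poly2_simps [simp]:
  "poly2 0 x1 x2 = 0"
  "poly2 1 x1 x2 = 1"
  "poly2 [:r:] x1 x2 = poly r x1"
  "poly2 (p + q) x1 x2 = poly2 p x1 x2 + poly2 q x1 x2"
  "poly2 (p - q) x1 x2 = poly2 p x1 x2 - poly2 q x1 x2"
  "poly2 (p * q) x1 x2 = poly2 p x1 x2 * poly2 q x1 x2"
  "poly2 (smult r p) x1 x2 = poly r x1 * poly2 p x1 x2"
  "poly2 (p ^ k) x1 x2 = poly2 p x1 x2 ^ k"
  "poly2 (\<Sum>i\<in>I. f i) x1 x2 = (\<Sum>i\<in>I. poly2 (f i) x1 x2)"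
  by (simp_all add: poly2_eq_poly_poly poly_power poly_sum)

definition x1_minus_x2 :: "complex poly poly" where
  "x1_minus_x2 = [:[:0, 1:], -1:]"

lemma poly2_x1_minus_x2 [simp]: "poly2 x1_minus_x2 x1 x2 = x1 - x2"
  by (simp add: poly2_eq_poly_poly x1_minus_x2_def)

definition pderiv1 :: "complex poly poly \<Rightarrow> complex poly poly" where
  "pderiv1 p = map_poly pderiv p"

lemma poly_pderiv1: "poly (pderiv1 p) [:c:] = pderiv (poly p [:c:])"
  unfolding pderiv1_def
proof (induction p)
  case (pCons a p)
  have "map_poly pderiv (pCons a p) = pCons (pderiv a) (map_poly pderiv p)"
    by (rule map_poly_pCons) simp
  then show ?case using pCons.IH by (simp add: pderiv_add pderiv_mult pderiv_pCons pderiv_smult)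
qed simp

lemma has_field_derivative_poly2: "((\<lambda>y. poly2 p y x2) has_field_derivative poly2 (pderiv1 p) y x2) (at y)"
  unfolding poly2_eq_poly_poly poly_pderiv1 by (rule poly_DERIV)

lemma has_field_derivative_divide_power:
  fixes S P :: "complex \<Rightarrow> complex"
  assumes "(S has_field_derivative S') (at y)" "(P has_field_derivative P') (at y)" "P y \<noteq> 0"
  shows "((\<lambda>z. S z / P z ^ k) has_field_derivative (P y * S' - of_nat k * P' * S y) / P y ^ Suc k) (at y)"
proof -
  have "((\<lambda>z. S z / P z ^ k) has_field_derivative
     (S' * P y ^ k - S y * (of_nat k * P y ^ (k - 1) * P')) / (P y ^ k * P y ^ k)) (at y)"
    using assms by (auto intro!: derivative_eq_intros)
  also have "(S' * P y ^ k - S y * (of_nat k * P y ^ (k - 1) * P')) / (P y ^ k * P y ^ k)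
       = (P y * S' - of_nat k * P' * S y) / P y ^ Suc k"
    using assms(3) by (cases k) (simp_all add: field_simps power_add[symmetric])
  finally show ?thesis .
qed

lemma has_field_derivative_scaled_system:
  fixes \<Gamma> :: "nat \<Rightarrow> nat \<Rightarrow> complex poly" and q :: "complex poly"
  assumes v': "(v m has_field_derivative (\<Sum>j<d. poly (\<Gamma> m j) y * v j y) / poly q y) (at y)"
    and q: "poly q y \<noteq> 0" and y: "y \<noteq> x2" and m: "m < d"
  shows "((\<lambda>y. v m y / (y - x2)^2) has_field_derivative
     (\<Sum>j<d. poly2 ([:\<Gamma> m j:] * x1_minus_x2 - (if m = j then [:2 * q:] else 0)) y x2 * (v j y / (y - x2)^2))
       / poly2 ([:q:] * x1_minus_x2) y x2) (at y)"
proof -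
  define t where "t = y - x2"
  define w where "w j = v j y / t^2" for j
  have t: "t \<noteq> 0" using y by (simp add: t_def)
  have "((\<lambda>y. v m y / (y - x2)^2) has_field_derivative
      ((\<Sum>j<d. poly (\<Gamma> m j) y * v j y) / poly q y * t^2 - v m y * (2 * t)) / (t^2 * t^2)) (at y)"
    unfolding t_def using y by (auto intro!: derivative_eq_intros v')
  also have "((\<Sum>j<d. poly (\<Gamma> m j) y * v j y) / poly q y * t^2 - v m y * (2 * t)) / (t^2 * t^2)
      = ((\<Sum>j<d. poly (\<Gamma> m j) y * t * w j) - 2 * poly q y * w m) / (poly q y * t)"
    using q t by (simp add: w_def field_simps sum_distrib_left sum_divide_distrib power2_eq_square)
  also have "(\<Sum>j<d. poly (\<Gamma> m j) y * t * w j) - 2 * poly q y * w m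
      = (\<Sum>j<d. (poly (\<Gamma> m j) y * t - (if m = j then 2 * poly q y else 0)) * w j)"
  proof -
    have "(\<Sum>j<d. (if m = j then 2 * poly q y else 0) * w j) = (\<Sum>j<d. if m = j then 2 * poly q y * w j else 0)"
      by (rule sum.cong) simp_all
    with m show ?thesis
      by (simp add: left_diff_distrib sum_subtractf)
  qed
  finally show ?thesis
    by (simp add: t_def w_def if_distrib[of "\<lambda>p. poly2 p _ _"] cong: if_cong)
qed

text \<open>If u' = A u / p, then u^(k) = R_k u / p^k with R_k = deriv_coeffs d p A k.\<close>
primrec deriv_coeffs ::
  "nat \<Rightarrow> complex poly poly \<Rightarrow> (nat \<Rightarrow> nat \<Rightarrow> complex poly poly) \<Rightarrow> nat \<Rightarrow> nat \<Rightarrow> nat \<Rightarrow> complex poly poly"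
where
  "deriv_coeffs d p A 0 l m = (if l = m then 1 else 0)"
| "deriv_coeffs d p A (Suc k) l m = p * pderiv1 (deriv_coeffs d p A k l m)
     + (\<Sum>j<d. deriv_coeffs d p A k l j * A j m) - of_nat k * pderiv1 p * deriv_coeffs d p A k l m"

lemma has_field_derivative_row_quotient:
  assumes u': "\<And>m. m < d \<Longrightarrow> (u m has_field_derivative (\<Sum>j<d. poly2 (A m j) y x2 * u j y) / poly2 p y x2) (at y)"
    and p: "poly2 p y x2 \<noteq> 0"
  shows "((\<lambda>y. (\<Sum>m<d. poly2 (r m) y x2 * u m y) / poly2 p y x2 ^ k) has_field_derivative
      (\<Sum>m<d. poly2 (p * pderiv1 (r m) + (\<Sum>j<d. r j * A j m) - of_nat k * pderiv1 p * r m) y x2 * u m y)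
        / poly2 p y x2 ^ Suc k) (at y)"
proof -
  define P where "P = poly2 p y x2"
  define P' where "P' = poly2 (pderiv1 p) y x2"
  define a where "a m j = poly2 (A m j) y x2" for m j
  define w where "w m = poly2 (r m) y x2" for m
  define w' where "w' m = poly2 (pderiv1 (r m)) y x2" for m
  have "((\<lambda>y. \<Sum>m<d. poly2 (r m) y x2 * u m y) has_field_derivative
      (\<Sum>m<d. w m * ((\<Sum>j<d. a m j * u j y) / P) + w' m * u m y)) (at y)"
    unfolding w_def w'_def a_def P_def
    by (intro DERIV_sum DERIV_mult' has_field_derivative_poly2 u') simp
  from has_field_derivative_divide_power[OF this has_field_derivative_poly2 p, of k]
  have "((\<lambda>y. (\<Sum>m<d. poly2 (r m) y x2 * u m y) / poly2 p y x2 ^ k) has_field_derivative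
      (P * (\<Sum>m<d. w m * ((\<Sum>j<d. a m j * u j y) / P) + w' m * u m y)
        - of_nat k * P' * (\<Sum>m<d. w m * u m y)) / P ^ Suc k) (at y)"
    by (simp add: P_def P'_def w_def)
  moreover have "P * (\<Sum>m<d. w m * ((\<Sum>j<d. a m j * u j y) / P) + w' m * u m y)
        - of_nat k * P' * (\<Sum>m<d. w m * u m y)
      = (\<Sum>m<d. poly2 (p * pderiv1 (r m) + (\<Sum>j<d. r j * A j m) - of_nat k * pderiv1 p * r m) y x2 * u m y)"
  proof -
    have "P * (\<Sum>m<d. w m * ((\<Sum>j<d. a m j * u j y) / P) + w' m * u m y)
        = (\<Sum>m<d. w m * (\<Sum>j<d. a m j * u j y)) + (\<Sum>m<d. P * w' m * u m y)"
      unfolding sum.distrib[symmetric] sum_distrib_left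
      by (intro sum.cong refl) (use p in \<open>simp add: P_def field_simps sum_distrib_left\<close>)
    also have "(\<Sum>m<d. w m * (\<Sum>j<d. a m j * u j y)) = (\<Sum>m<d. (\<Sum>j<d. w j * a j m) * u m y)"
    proof -
      have "(\<Sum>m<d. w m * (\<Sum>j<d. a m j * u j y)) = (\<Sum>m<d. \<Sum>j<d. w m * a m j * u j y)"
        by (simp add: sum_distrib_left mult.assoc)
      also have "\<dots> = (\<Sum>j<d. \<Sum>m<d. w m * a m j * u j y)"
        by (rule sum.swap)
      finally show ?thesis
        by (simp add: sum_distrib_right)
    qed
    finally show ?thesis
      by (simp add: poly2_eq_poly_poly poly_sum P_def P'_def a_def w_def w'_def algebra_simps
          sum.distrib sum_subtractf sum_distrib_left)
  qed
  ultimately show ?thesis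
    by (simp add: P_def)
qed

lemma higher_deriv_linear_system:
  assumes S: "open S"
    and p: "\<And>y. y \<in> S \<Longrightarrow> poly2 p y x2 \<noteq> 0"
    and u': "\<And>y m. y \<in> S \<Longrightarrow> m < d \<Longrightarrow>
       (u m has_field_derivative (\<Sum>j<d. poly2 (A m j) y x2 * u j y) / poly2 p y x2) (at y)"
    and f: "\<And>y. y \<in> S \<Longrightarrow> f y = (\<Sum>l<d. \<nu> l * u l y)"
    and y: "y \<in> S"
  shows "(deriv ^^ k) f y
    = (\<Sum>l<d. \<nu> l * ((\<Sum>m<d. poly2 (deriv_coeffs d p A k l m) y x2 * u m y) / poly2 p y x2 ^ k))"
  using y
proof (induction k arbitrary: y)
  case 0
  have "(\<Sum>m<d. poly2 (deriv_coeffs d p A 0 l m) y x2 * u m y) = (\<Sum>m<d. if l = m then u m y else 0)" for l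
    by (intro sum.cong) simp_all
  then have "(\<Sum>m<d. poly2 (deriv_coeffs d p A 0 l m) y x2 * u m y) = u l y" if "l < d" for l
    using that by simp
  then show ?case
    using f[OF 0] by simp
next
  case (Suc k)
  define F where "F k y = (\<Sum>l<d. \<nu> l *
      ((\<Sum>m<d. poly2 (deriv_coeffs d p A k l m) y x2 * u m y) / poly2 p y x2 ^ k))" for k y
  have "(F k has_field_derivative F (Suc k) y) (at y)"
    unfolding F_def deriv_coeffs.simps(2) using Suc.prems
    by (intro DERIV_sum DERIV_cmult has_field_derivative_row_quotient) (auto intro: u' simp: p)
  then have "((deriv ^^ k) f has_field_derivative F (Suc k) y) (at y)"
    by (rule has_field_derivative_transform_within_open[OF _ S Suc.prems]) (simp add: Suc.IH F_def)
  then show ?case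
    by (simp add: DERIV_imp_deriv F_def)
qed

lemma nontrivial_relation_rational_form:
  fixes R :: "nat \<Rightarrow> nat \<Rightarrow> nat \<Rightarrow> complex poly poly"
  assumes "p \<noteq> 0"
  shows "\<exists>\<beta>. (\<exists>k\<le>d^2. \<beta> k \<noteq> 0) \<and> (\<forall>x1 x2 c f. poly2 p x1 x2 \<noteq> 0 \<longrightarrow>
     (\<forall>k. f k = (\<Sum>l<d. \<Sum>m<d. c l m * poly2 (R k l m) x1 x2) / poly2 p x1 x2 ^ k) \<longrightarrow>
     (\<Sum>k=0..d^2. poly2 (\<beta> k) x1 x2 * f k) = 0)"
proof -
  obtain \<alpha> where \<alpha>_nz: "\<exists>k\<in>{0..d^2}. \<alpha> k \<noteq> 0"
    and \<alpha>_rel: "\<And>l m. l < d \<Longrightarrow> m < d \<Longrightarrow> (\<Sum>k\<in>{0..d^2}. \<alpha> k * R k l m) = 0"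
  proof -
    have "\<exists>\<alpha>. (\<exists>k\<in>{0..d^2}. \<alpha> k \<noteq> 0) \<and>
        (\<forall>lm\<in>{..<d} \<times> {..<d}. (\<Sum>k\<in>{0..d^2}. \<alpha> k * R k (fst lm) (snd lm)) = 0)"
      by (rule nontrivial_linear_relation) (auto simp: power2_eq_square)
    then show ?thesis
      using that by fastforce
  qed
  have "(\<Sum>k=0..d^2. poly2 (\<alpha> k * p ^ k) x1 x2 * f k) = 0"
    if p: "poly2 p x1 x2 \<noteq> 0"
      and f: "\<forall>k. f k = (\<Sum>l<d. \<Sum>m<d. c l m * poly2 (R k l m) x1 x2) / poly2 p x1 x2 ^ k"
    for x1 x2 c f
  proof -
    have fk: "poly2 p x1 x2 ^ k * f k = (\<Sum>l<d. \<Sum>m<d. c l m * poly2 (R k l m) x1 x2)" for k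
      using p f by simp
    have "poly2 (\<alpha> k * p ^ k) x1 x2 * f k = poly2 (\<alpha> k) x1 x2 * (poly2 p x1 x2 ^ k * f k)" for k
      by (simp add: mult.assoc)
    then have "(\<Sum>k=0..d^2. poly2 (\<alpha> k * p ^ k) x1 x2 * f k)
        = (\<Sum>k=0..d^2. \<Sum>l<d. \<Sum>m<d. c l m * poly2 (\<alpha> k * R k l m) x1 x2)"
      unfolding fk by (simp add: sum_distrib_left mult_ac)
    also have "\<dots> = (\<Sum>l<d. \<Sum>m<d. c l m * poly2 (\<Sum>k=0..d^2. \<alpha> k * R k l m) x1 x2)"
      by (simp add: sum.swap[of _ "{0..d^2}"] sum_distrib_left)
    also have "\<dots> = 0"
      by (simp add: \<alpha>_rel)
    finally show ?thesis .
  qed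
  moreover have "\<exists>k\<le>d^2. \<alpha> k * p ^ k \<noteq> 0"
    using \<alpha>_nz assms by auto
  ultimately show ?thesis
    by (intro exI[of _ "\<lambda>k. \<alpha> k * p ^ k"]) blast
qed

section \<open>Derivatives of the two-point function\<close>

locale rational_lie_ode =
  fixes G :: "'n::finite cmat set"
    and D \<Psi> :: "complex \<Rightarrow> 'n cmat"
    and P Q :: "'n \<Rightarrow> 'n \<Rightarrow> complex poly"
    and U :: "complex set"
  assumes lie_group: "complex_matrix_lie_group G"
    and D_rational: "rational_matrix_fun D P Q"
    and open_U: "open U"
    and U_poles: "U \<inter> poles Q = {}"
    and \<Psi>_in_G: "\<forall>x\<in>U. \<Psi> x \<in> G"
    and \<Psi>_holomorphic: "\<forall>i j. (\<lambda>x. \<Psi> x $ i $ j) holomorphic_on U"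
    and \<Psi>_ode: "\<forall>x\<in>U. \<forall>i j. ((\<lambda>y. \<Psi> y $ i $ j) has_field_derivative (D x ** \<Psi> x) $ i $ j) (at x)"
begin

lemma Mmat_in_lie_algebra:
  "y \<in> U \<Longrightarrow> E \<in> matrix_lie_algebra G \<Longrightarrow> Mmat \<Psi> y E \<in> matrix_lie_algebra G"
  unfolding Mmat_def using \<Psi>_in_G by (intro matrix_lie_algebra_conj[OF lie_group]) blast+

lemma Mmat_has_entrywise_derivative:
  assumes "y \<in> U"
  shows "has_entrywise_derivative (\<lambda>y. Mmat \<Psi> y E) (commutator (D y) (Mmat \<Psi> y E)) y"
proof -
  have "G \<subseteq> {A. invertible A}"
    using lie_group by (simp add: complex_matrix_lie_group_def)
  then have "\<And>y. y \<in> U \<Longrightarrow> invertible (\<Psi> y)"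
    using \<Psi>_in_G by blast
  then show ?thesis
    using \<Psi>_holomorphic \<Psi>_ode assms
    by (intro has_entrywise_derivative_Mmat[OF open_U assms]) (auto simp: has_entrywise_derivative_def)
qed

lemma W2_eq_sum_coordinates:
  assumes expand: "\<And>X. X \<in> matrix_lie_algebra G \<Longrightarrow> X = (\<Sum>l<d. cscale (lin_form (L l) X) (b l))"
    and "E1 \<in> matrix_lie_algebra G" "y \<in> U"
  shows "W2 \<Psi> y E1 x2 E2
    = (\<Sum>l<d. trace (b l ** Mmat \<Psi> x2 E2) * (lin_form (L l) (Mmat \<Psi> y E1) / (y - x2)^2))"
proof -
  from expand[OF Mmat_in_lie_algebra[OF assms(3,2)]]
  have "trace (Mmat \<Psi> y E1 ** Mmat \<Psi> x2 E2)
      = trace ((\<Sum>l<d. cscale (lin_form (L l) (Mmat \<Psi> y E1)) (b l)) ** Mmat \<Psi> x2 E2)"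
    by (rule arg_cong)
  then show ?thesis
    by (simp add: W2_def trace_sum_cscale_mult sum_divide_distrib mult.commute)
qed

text \<open>The coordinates u_m of M(y) / (y - x2)^2 solve u' = A u / p: the m-th coordinate of [D(y), b_j] is
  Gamma_mj(y) / q(y), and the diagonal term -2 / (y - x2) comes from the factor (y - x2)^-2.\<close>
lemma W2_higher_derivs:
  assumes expand: "\<And>X. X \<in> matrix_lie_algebra G \<Longrightarrow> X = (\<Sum>l<d. cscale (lin_form (L l) X) (b l))"
    and q: "\<And>y. y \<in> U \<Longrightarrow> poly q y \<noteq> 0"
    and \<Gamma>: "\<And>y m j. y \<in> U \<Longrightarrow> poly (\<Gamma> m j) y = poly q y * lin_form (L m) (commutator (D y) (b j))"
    and E1: "E1 \<in> matrix_lie_algebra G" and x: "x1 \<in> U" "x1 \<noteq> x2"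
  defines "p \<equiv> [:q:] * x1_minus_x2"
    and "A \<equiv> \<lambda>m j. [:\<Gamma> m j:] * x1_minus_x2 - (if m = j then [:2 * q:] else 0)"
  shows "(deriv ^^ k) (\<lambda>y. W2 \<Psi> y E1 x2 E2) x1
    = (\<Sum>l<d. trace (b l ** Mmat \<Psi> x2 E2) * ((\<Sum>m<d. poly2 (deriv_coeffs d p A k l m) x1 x2
         * (lin_form (L m) (Mmat \<Psi> x1 E1) / (x1 - x2)^2)) / poly2 p x1 x2 ^ k))"
proof -
  define S where "S = U - {x2}"
  define v where "v = (\<lambda>m y. lin_form (L m) (Mmat \<Psi> y E1))"
  have v': "(v m has_field_derivative (\<Sum>j<d. poly (\<Gamma> m j) y * v j y) / poly q y) (at y)"
    if y: "y \<in> U" for y m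
  proof -
    have "((\<lambda>y. lin_form (L m) (Mmat \<Psi> y E1)) has_field_derivative
        (\<Sum>j<d. lin_form (L m) (commutator (D y) (b j)) * lin_form (L j) (Mmat \<Psi> y E1))) (at y)"
      using has_field_derivative_lin_form_coordinates[where M = "\<lambda>y. Mmat \<Psi> y E1", OF expand
          Mmat_in_lie_algebra[OF y E1] Mmat_has_entrywise_derivative[OF y]]
      by blast
    then show ?thesis
      unfolding v_def using q[OF y] \<Gamma>[OF y] by (simp add: sum_divide_distrib)
  qed
  have u': "((\<lambda>y. v m y / (y - x2)^2) has_field_derivative
      (\<Sum>j<d. poly2 (A m j) y x2 * (v j y / (y - x2)^2)) / poly2 p y x2) (at y)"
    if "y \<in> S" "m < d" for y m
  proof -
    have y: "y \<in> U" "y \<noteq> x2"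
      using that(1) by (auto simp: S_def)
    from has_field_derivative_scaled_system[where \<Gamma> = \<Gamma>, OF v'[OF y(1)] q[OF y(1)] y(2) that(2)]
    show ?thesis
      unfolding A_def p_def by simp
  qed
  have "open S" "x1 \<in> S"
    using open_U x by (auto simp: S_def open_delete)
  moreover have "poly2 p y x2 \<noteq> 0" if "y \<in> S" for y
    using q that by (simp add: p_def S_def)
  moreover have "W2 \<Psi> y E1 x2 E2 = (\<Sum>l<d. trace (b l ** Mmat \<Psi> x2 E2) * (v l y / (y - x2)^2))"
    if "y \<in> S" for y
    using W2_eq_sum_coordinates[OF expand E1] that by (simp add: S_def v_def)
  ultimately show ?thesis
    using higher_deriv_linear_system[where u = "\<lambda>m y. v m y / (y - x2)^2", OF _ _ u'] by (simp add: v_def)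
qed

lemma W2_higher_derivs_rational_form:
  assumes E1: "E1 \<in> matrix_lie_algebra G"
  defines "d \<equiv> cdim (matrix_lie_algebra G)"
  shows "\<exists>p R. p \<noteq> 0 \<and> (\<forall>x1\<in>U. \<forall>x2\<in>U. x1 \<noteq> x2 \<longrightarrow> poly2 p x1 x2 \<noteq> 0 \<and>
           (\<exists>c. \<forall>k. (deriv ^^ k) (\<lambda>y. W2 \<Psi> y E1 x2 E2) x1
                  = (\<Sum>l<d. \<Sum>m<d. c l m * poly2 (R k l m) x1 x2) / poly2 p x1 x2 ^ k))"
proof -
  obtain b L where "\<forall>X\<in>matrix_lie_algebra G. X = (\<Sum>l<d. cscale (lin_form (L l) X) (b l))"
    using lin_form_coordinates[of "matrix_lie_algebra G"] unfolding d_def by blast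
  then have expand: "\<And>X. X \<in> matrix_lie_algebra G \<Longrightarrow> X = (\<Sum>l<d. cscale (lin_form (L l) X) (b l))"
    by blast
  obtain q \<Gamma> where "q \<noteq> 0" and q\<Gamma>: "\<And>x. x \<notin> poles Q \<Longrightarrow> poly q x \<noteq> 0 \<and>
      (\<forall>L B. poly (\<Gamma> L B) x = poly q x * lin_form L (commutator (D x) B))"
    using lin_form_commutator_rational[OF D_rational] by blast
  have q: "poly q y \<noteq> 0" and
    \<Gamma>: "poly (\<Gamma> (L m) (b j)) y = poly q y * lin_form (L m) (commutator (D y) (b j))"
    if "y \<in> U" for y m j
    using q\<Gamma> U_poles that by blast+
  define p where "p = [:q:] * x1_minus_x2"
  define A where "A = (\<lambda>m j. [:\<Gamma> (L m) (b j):] * x1_minus_x2 - (if m = j then [:2 * q:] else 0))"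
  have "p \<noteq> 0"
    using \<open>q \<noteq> 0\<close> by (simp add: p_def x1_minus_x2_def)
  moreover have "poly2 p x1 x2 \<noteq> 0" if "x1 \<in> U" "x1 \<noteq> x2" for x1 x2
    using q that by (simp add: p_def)
  moreover have "\<exists>c. \<forall>k. (deriv ^^ k) (\<lambda>y. W2 \<Psi> y E1 x2 E2) x1
      = (\<Sum>l<d. \<Sum>m<d. c l m * poly2 (deriv_coeffs d p A k l m) x1 x2) / poly2 p x1 x2 ^ k"
    if "x1 \<in> U" "x1 \<noteq> x2" for x1 x2
  proof (intro exI allI)
    fix k
    show "(deriv ^^ k) (\<lambda>y. W2 \<Psi> y E1 x2 E2) x1 = (\<Sum>l<d. \<Sum>m<d.
        trace (b l ** Mmat \<Psi> x2 E2) * (lin_form (L m) (Mmat \<Psi> x1 E1) / (x1 - x2)^2)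
          * poly2 (deriv_coeffs d p A k l m) x1 x2) / poly2 p x1 x2 ^ k"
    proof -
      have "(deriv ^^ k) (\<lambda>y. W2 \<Psi> y E1 x2 E2) x1 = (\<Sum>l<d. trace (b l ** Mmat \<Psi> x2 E2) *
          ((\<Sum>m<d. poly2 (deriv_coeffs d p A k l m) x1 x2 * (lin_form (L m) (Mmat \<Psi> x1 E1) / (x1 - x2)^2))
            / poly2 p x1 x2 ^ k))"
        unfolding p_def A_def by (rule W2_higher_derivs[where \<Gamma> = "\<lambda>m j. \<Gamma> (L m) (b j)", OF expand q \<Gamma> E1 that])
      then show ?thesis
        by (simp add: sum_divide_distrib sum_distrib_left mult_ac)
    qed
  qed
  ultimately show ?thesis
    by (intro exI[of _ p] exI[of _ "deriv_coeffs d p A"] conjI ballI impI) blast+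
qed

end

theorem mainTheorem3:
  fixes G :: "'n::finite cmat set"
    and D \<Psi> :: "complex \<Rightarrow> 'n cmat"
    and P Q :: "'n \<Rightarrow> 'n \<Rightarrow> complex poly"
    and U :: "complex set"
    and E1 E2 :: "'n cmat"
  assumes G: "reductive_complex_matrix_group G"
    and D_rat: "rational_matrix_fun D P Q"
    and U: "open U" "connected U" "simply_connected U" "U \<inter> poles Q = {}"
    and D_g: "\<forall>x\<in>U. D x \<in> matrix_lie_algebra G"
    and Psi_G: "\<forall>x\<in>U. \<Psi> x \<in> G"
    and Psi_hol: "\<forall>i j. (\<lambda>x. \<Psi> x $ i $ j) holomorphic_on U"
    and Psi_ode: "\<forall>x\<in>U. \<forall>i j. ((\<lambda>y. \<Psi> y $ i $ j) has_field_derivative (D x ** \<Psi> x) $ i $ j) (at x)"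
    and E: "E1 \<in> matrix_lie_algebra G" "E2 \<in> matrix_lie_algebra G"
  shows "\<exists>\<alpha> :: nat \<Rightarrow> complex poly poly.
           (\<exists>k \<le> (cdim (matrix_lie_algebra G))^2. \<alpha> k \<noteq> 0) \<and>
           (\<forall>x1\<in>U. \<forall>x2\<in>U. x1 \<noteq> x2 \<longrightarrow>
              (\<Sum>k = 0..(cdim (matrix_lie_algebra G))^2.
                 poly2 (\<alpha> k) x1 x2 * (deriv ^^ k) (\<lambda>y. W2 \<Psi> y E1 x2 E2) x1) = 0)"
proof -
  let ?d = "cdim (matrix_lie_algebra G)"
  have "complex_matrix_lie_group G"
    using G unfolding reductive_complex_matrix_group_def by blast
  then interpret rational_lie_ode G D \<Psi> P Q U
    using D_rat U(1,4) Psi_G Psi_hol Psi_ode by unfold_locales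
  obtain p R where "p \<noteq> 0" and rational_form: "\<forall>x1\<in>U. \<forall>x2\<in>U. x1 \<noteq> x2 \<longrightarrow> poly2 p x1 x2 \<noteq> 0 \<and>
      (\<exists>c. \<forall>k. (deriv ^^ k) (\<lambda>y. W2 \<Psi> y E1 x2 E2) x1
         = (\<Sum>l<?d. \<Sum>m<?d. c l m * poly2 (R k l m) x1 x2) / poly2 p x1 x2 ^ k)"
    using W2_higher_derivs_rational_form[OF E(1)] by blast
  obtain \<beta> where "\<exists>k \<le> ?d^2. \<beta> k \<noteq> 0" and relation: "\<And>x1 x2 c f. poly2 p x1 x2 \<noteq> 0 \<Longrightarrow>
      (\<forall>k. f k = (\<Sum>l<?d. \<Sum>m<?d. c l m * poly2 (R k l m) x1 x2) / poly2 p x1 x2 ^ k) \<Longrightarrow>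
      (\<Sum>k = 0..?d^2. poly2 (\<beta> k) x1 x2 * f k) = 0"
    using nontrivial_relation_rational_form[OF \<open>p \<noteq> 0\<close>, of ?d R] by blast
  then show ?thesis
  proof (intro exI[of _ \<beta>] conjI ballI impI)
    fix x1 x2
    assume "x1 \<in> U" "x2 \<in> U" "x1 \<noteq> x2"
    with rational_form obtain c where "poly2 p x1 x2 \<noteq> 0" and "\<forall>k. (deriv ^^ k) (\<lambda>y. W2 \<Psi> y E1 x2 E2) x1
        = (\<Sum>l<?d. \<Sum>m<?d. c l m * poly2 (R k l m) x1 x2) / poly2 p x1 x2 ^ k"
      by blast
    then show "(\<Sum>k = 0..?d^2. poly2 (\<beta> k) x1 x2 * (deriv ^^ k) (\<lambda>y. W2 \<Psi> y E1 x2 E2) x1) = 0"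
      by (rule relation)
  qed
qed

end
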